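(* Let $f,g\in\mathcal{S}_d$ be such that $\hat{\mathbb{D}}_{\beta,d}(f,g)$ is finite for some $\beta>0$, and suppose that $S_f(x)\ll x^\alpha$. Then $S_g(x)\ll x^{\max(\alpha,\beta)}$.
   Context: $\mathcal{S}_d$ is the set of "degree $d$" multiplicative functions: those $f$ with $f=f_1*\cdots*f_d$, where each $f_i$ is a completely multiplicative function with $|f_i(n)|\le1$ for all $n$, and $(a*b)(n)=\sum_{dm=n}a(d)b(m)$. $S_f(x):=\sum_{n\le x}f(n)$. $\hat{\mathbb{D}}_{\beta,k}(f,g):=\sum_p\sum_{j=1}^k\frac{|f(p^j)-g(p^j)|}{p^{j\beta}}$ (sum over primes). *)

theory Defs
  imports "HOL-Analysis.Analysis" "HOL-Library.Landau_Symbols"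
begin

text \<open>Arithmetic functions are modelled as nat => complex; only arguments n >= 1 matter.\<close>

definition completely_multiplicative :: "(nat \<Rightarrow> complex) \<Rightarrow> bool" where
  "completely_multiplicative h \<longleftrightarrow>
     h 1 = 1 \<and> (\<forall>m n. m > 0 \<longrightarrow> n > 0 \<longrightarrow> h (m * n) = h m * h n)"

definition dirichlet_conv :: "(nat \<Rightarrow> complex) \<Rightarrow> (nat \<Rightarrow> complex) \<Rightarrow> nat \<Rightarrow> complex" where
  "dirichlet_conv a b n = (\<Sum>k | k dvd n. a k * b (n div k))"

definition dirichlet_unit :: "nat \<Rightarrow> complex" where
  "dirichlet_unit n = (if n = 1 then 1 else 0)"

definition conv_list :: "(nat \<Rightarrow> complex) list \<Rightarrow> nat \<Rightarrow> complex" where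
  "conv_list fs = foldr dirichlet_conv fs dirichlet_unit"

definition S_deg :: "nat \<Rightarrow> (nat \<Rightarrow> complex) set" where
  "S_deg d = {f. \<exists>fs. length fs = d \<and>
      (\<forall>h\<in>set fs. completely_multiplicative h \<and> (\<forall>n>0. cmod (h n) \<le> 1)) \<and>
      (\<forall>n>0. f n = conv_list fs n)}"

definition summatory :: "(nat \<Rightarrow> complex) \<Rightarrow> real \<Rightarrow> complex" where
  "summatory f x = (\<Sum>n\<in>{1..nat \<lfloor>x\<rfloor>}. f n)"

definition Dhat_term :: "real \<Rightarrow> nat \<Rightarrow> (nat \<Rightarrow> complex) \<Rightarrow> (nat \<Rightarrow> complex) \<Rightarrow> nat \<Rightarrow> real" where
  "Dhat_term \<beta> k f g p = (\<Sum>j=1..k. cmod (f (p ^ j) - g (p ^ j)) / real p powr (real j * \<beta>))"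

end

theory Submission
  imports Defs "HOL-Computational_Algebra.Primes" "HOL-Computational_Algebra.Formal_Power_Series"
begin

text \<open>Write \<open>f = f\<^sub>1 * \<dots> * f\<^sub>d\<close> and \<open>g = g\<^sub>1 * \<dots> * g\<^sub>d\<close>. Then \<open>g = h * f\<close> for the multiplicative
  \<open>h\<close> whose Euler factor at \<open>p\<close> is \<open>G\<^sub>p(X) \<Prod>\<^sub>i (1 - f\<^sub>i(p) X)\<close>, where \<open>G\<^sub>p\<close> and \<open>F\<^sub>p\<close> are the
  Euler factors of \<open>g\<close> and \<open>f\<close>. This factor minus \<open>1\<close> is \<open>G\<^sub>p - F\<^sub>p\<close> times power series whose
  coefficients are bounded in terms of \<open>d\<close> only, so the \<open>p\<close>-part of \<open>\<Sum> |h(k)| k^(-\<beta>)\<close> is at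
  most a constant times the \<open>p\<close>-th term of \<open>D(f, g)\<close>, and the Euler product shows that
  \<open>\<Sum> |h(k)| k^(-\<beta>)\<close> converges. With \<open>\<gamma> = max \<alpha> \<beta>\<close> one then has
  \<open>S\<^sub>g(x) = \<Sum>k\<le>x. h(k) S\<^sub>f(x/k) \<ll> \<Sum>k\<le>x. |h(k)| (x/k)^\<gamma> \<le> x^\<gamma> \<Sum> |h(k)| k^(-\<beta>)\<close>.\<close>

unbundle no vec_syntax
notation fps_nth (infixl "$" 75)

section \<open>Multiplicative functions\<close>

definition multiplicative :: "(nat \<Rightarrow> 'a :: comm_monoid_mult) \<Rightarrow> bool" where
  "multiplicative h \<longleftrightarrow>
     h 1 = 1 \<and> (\<forall>m n. m > 0 \<longrightarrow> n > 0 \<longrightarrow> coprime m n \<longrightarrow> h (m * n) = h m * h n)"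

lemma completely_multiplicative_imp_multiplicative:
  "completely_multiplicative h \<Longrightarrow> multiplicative h"
  unfolding multiplicative_def completely_multiplicative_def by auto

lemma multiplicative_dirichlet_unit: "multiplicative dirichlet_unit"
  unfolding multiplicative_def dirichlet_unit_def by auto

lemma multiplicative_prod_prime_powers:
  assumes "multiplicative h" "finite S" "\<forall>p\<in>S. prime p"
  shows "h (\<Prod>p\<in>S. p ^ e p) = (\<Prod>p\<in>S. h (p ^ e p))"
  using assms(2,3)
proof (induction S rule: finite_induct)
  case empty
  then show ?case using assms(1) by (simp add: multiplicative_def)
next
  case (insert p S)
  have "coprime (p ^ e p) (q ^ e q)" if "q \<in> S" for q
  proof -
    have "p \<noteq> q" using insert.hyps(2) that by auto
    then show ?thesis using insert.prems that by (simp add: primes_coprime)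
  qed
  then have "coprime (p ^ e p) (\<Prod>q\<in>S. q ^ e q)"
    by (rule prod_coprime_right)
  moreover have "p ^ e p > 0" "(\<Prod>q\<in>S. q ^ e q) > 0"
    using insert prime_gt_0_nat by (auto intro: prod_pos)
  ultimately show ?case
    using insert assms(1) by (simp add: multiplicative_def)
qed

lemma multiplicative_eq_prod_prime_factors:
  assumes "multiplicative h" "n > 0"
  shows "h n = (\<Prod>p\<in>prime_factors n. h (p ^ multiplicity p n))"
  using multiplicative_prod_prime_powers[OF assms(1), of "prime_factors n" "\<lambda>p. multiplicity p n"]
    prime_factorization_nat[OF assms(2)] by auto

lemma multiplicative_eqI:
  assumes "multiplicative h" "multiplicative h'" "\<And>p k. prime p \<Longrightarrow> h (p ^ k) = h' (p ^ k)"
    and "n > 0"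
  shows "h n = h' n"
  using assms multiplicative_eq_prod_prime_factors[OF assms(1,4)]
    multiplicative_eq_prod_prime_factors[OF assms(2,4)]
  by (simp add: prime_factors_multiplicity)

text \<open>Only the values \<open>\<phi> p k\<close> with \<open>k \<ge> 1\<close> matter.\<close>

definition multiplicative_from_prime_powers :: "(nat \<Rightarrow> nat \<Rightarrow> 'a :: comm_monoid_mult) \<Rightarrow> nat \<Rightarrow> 'a" where
  "multiplicative_from_prime_powers \<phi> n = (\<Prod>p\<in>prime_factors n. \<phi> p (multiplicity p n))"

lemma multiplicative_from_prime_powers_prime_power:
  "prime p \<Longrightarrow> k > 0 \<Longrightarrow> multiplicative_from_prime_powers \<phi> (p ^ k) = \<phi> p k"
  by (simp add: multiplicative_from_prime_powers_def prime_factorization_prime_power)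

lemma multiplicative_multiplicative_from_prime_powers:
  "multiplicative (multiplicative_from_prime_powers \<phi>)"
  unfolding multiplicative_def
proof (intro conjI allI impI)
  fix m n :: nat assume mn: "m > 0" "n > 0" "coprime m n"
  let ?\<phi>mn = "\<lambda>p. \<phi> p (multiplicity p (m * n))"
  have disj: "prime_factors m \<inter> prime_factors n = {}"
  proof (rule ccontr)
    assume "prime_factors m \<inter> prime_factors n \<noteq> {}"
    then obtain p where "prime p" "p dvd m" "p dvd n" by auto
    with mn(3) show False by (metis coprime_common_divisor_nat not_prime_1)
  qed
  have mult: "multiplicity p (m * n) = multiplicity p m + multiplicity p n" if "prime p" for p
    using that mn by (simp add: prime_elem_multiplicity_mult_distrib)
  have only_m: "multiplicity p (m * n) = multiplicity p m" if "p \<in> prime_factors m" for p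
  proof -
    have "p \<notin> prime_factors n" using that disj by blast
    then show ?thesis using that mult by (auto simp: prime_factors_multiplicity)
  qed
  have only_n: "multiplicity p (m * n) = multiplicity p n" if "p \<in> prime_factors n" for p
  proof -
    have "p \<notin> prime_factors m" using that disj by blast
    then show ?thesis using that mult by (auto simp: prime_factors_multiplicity)
  qed
  have "multiplicative_from_prime_powers \<phi> (m * n) =
          prod ?\<phi>mn (prime_factors m) * prod ?\<phi>mn (prime_factors n)"
    unfolding multiplicative_from_prime_powers_def using mn disj
    by (simp add: prime_factors_product prod.union_disjoint)
  also have "\<dots> = multiplicative_from_prime_powers \<phi> m * multiplicative_from_prime_powers \<phi> n"
    unfolding multiplicative_from_prime_powers_def by (simp add: only_m only_n cong: prod.cong)
  finally show "multiplicative_from_prime_powers \<phi> (m * n) =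
      multiplicative_from_prime_powers \<phi> m * multiplicative_from_prime_powers \<phi> n" .
qed (simp add: multiplicative_from_prime_powers_def)

lemma dirichlet_conv_mult_coprime:
  assumes "multiplicative a" "multiplicative b" "m > 0" "n > 0" "coprime m n"
  shows "dirichlet_conv a b (m * n) = dirichlet_conv a b m * dirichlet_conv a b n"
proof -
  let ?D = "\<lambda>x::nat. {k. k dvd x}"
  have gcd_factor: "gcd (i * j) m = i" "gcd (i * j) n = j" if "i dvd m" "j dvd n" for i j
    using that assms(5) by (metis coprime_commute coprime_mult_right_iff dvd_mult_div_cancel
        gcd_mult_left_right_cancel gcd_nat.order_iff mult.commute)+
  have inj: "inj_on (\<lambda>(i, j). i * j) (?D m \<times> ?D n)"
    by (rule inj_onI) (clarsimp, metis gcd_factor)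
  have img: "(\<lambda>(i, j). i * j) ` (?D m \<times> ?D n) = ?D (m * n)"
    by (auto intro: mult_dvd_mono elim!: division_decomp[elim_format])
  have term_mult: "a i * b (m div i) * (a j * b (n div j)) = a (i * j) * b (m * n div (i * j))"
    if "i dvd m" "j dvd n" for i j
  proof -
    have "coprime i j" "coprime (m div i) (n div j)"
      using that assms(5) by (metis coprime_divisors dvd_mult_div_cancel dvd_triv_right)+
    moreover have "i > 0" "j > 0" "m div i > 0" "n div j > 0"
      using that assms(3,4) by (auto intro: Nat.gr0I simp: dvd_div_eq_0_iff)
    moreover have "m * n div (i * j) = (m div i) * (n div j)"
      using that by (simp add: div_mult_div_if_dvd)
    ultimately show ?thesis
      using assms(1,2) unfolding multiplicative_def by simp
  qed
  have "dirichlet_conv a b m * dirichlet_conv a b n =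
        (\<Sum>(i, j)\<in>?D m \<times> ?D n. a i * b (m div i) * (a j * b (n div j)))"
    unfolding dirichlet_conv_def by (simp add: sum_product sum.cartesian_product)
  also have "\<dots> = (\<Sum>(i, j)\<in>?D m \<times> ?D n. a (i * j) * b (m * n div (i * j)))"
    by (intro sum.cong) (auto simp: term_mult)
  also have "\<dots> = dirichlet_conv a b (m * n)"
    unfolding dirichlet_conv_def img[symmetric] sum.reindex[OF inj] by (simp add: case_prod_unfold)
  finally show ?thesis ..
qed

lemma multiplicative_dirichlet_conv:
  assumes "multiplicative a" "multiplicative b"
  shows "multiplicative (dirichlet_conv a b)"
  using assms dirichlet_conv_mult_coprime[OF assms]
  unfolding multiplicative_def by (simp add: dirichlet_conv_def)

lemma multiplicative_conv_list:
  "\<forall>h\<in>set fs. completely_multiplicative h \<Longrightarrow> multiplicative (conv_list fs)"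
  by (induction fs) (simp_all add: conv_list_def multiplicative_dirichlet_unit
      multiplicative_dirichlet_conv completely_multiplicative_imp_multiplicative)

lemma dirichlet_conv_prime_power:
  assumes "prime p"
  shows "dirichlet_conv a b (p ^ k) = (\<Sum>i\<le>k. a (p ^ i) * b (p ^ (k - i)))"
proof -
  have divisors: "{d. d dvd p ^ k} = (\<lambda>i. p ^ i) ` {..k}"
    using divides_primepow_nat[OF assms] by auto
  have "inj_on (\<lambda>i. p ^ i) {..k}"
    using prime_gt_1_nat[OF assms] by (intro inj_onI) simp
  then show ?thesis
    using assms unfolding dirichlet_conv_def divisors
    by (simp add: sum.reindex power_diff prime_gt_0_nat)
qed

section \<open>Weighted norms of formal power series\<close>

text \<open>Truncation at degree \<open>N\<close> keeps this finite without any convergence hypothesis; all bounds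
  below are uniform in \<open>N\<close>.\<close>

definition fps_wnorm :: "nat \<Rightarrow> 'a :: real_normed_field fps \<Rightarrow> real \<Rightarrow> real" where
  "fps_wnorm N A r = (\<Sum>k\<le>N. norm (A $ k) * r ^ k)"

definition fps_geom :: "'a :: field \<Rightarrow> 'a fps" where
  "fps_geom c = Abs_fps (\<lambda>k. c ^ k)"

definition fps_geom_inv :: "'a :: field \<Rightarrow> 'a fps" where
  "fps_geom_inv c = 1 - fps_const c * fps_X"

lemma fps_geom_inv_mult_nth:
  "(fps_geom_inv c * A) $ k = (if k = 0 then A $ 0 else A $ k - c * A $ (k - 1))"
proof -
  have "fps_geom_inv c * A = A - fps_const c * (fps_X * A)"
    by (simp add: fps_geom_inv_def algebra_simps)
  then show ?thesis by (simp add: fps_X_mult_nth)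
qed

lemma fps_geom_inv_mult_geom: "fps_geom_inv c * fps_geom c = 1"
  by (rule fps_ext) (simp add: fps_geom_inv_mult_nth fps_geom_def power_eq_if)

lemma prod_fps_geom_inv_mult_prod_geom:
  "prod_list (map fps_geom_inv cs) * prod_list (map fps_geom cs) = 1"
proof (induction cs)
  case (Cons c cs)
  have "prod_list (map fps_geom_inv (c # cs)) * prod_list (map fps_geom (c # cs)) =
        (fps_geom_inv c * fps_geom c) * (prod_list (map fps_geom_inv cs) * prod_list (map fps_geom cs))"
    by (simp add: ac_simps)
  then show ?case using Cons by (simp add: fps_geom_inv_mult_geom)
qed simp

lemma prod_fps_geom_inv_nth_eq_0: "k > length cs \<Longrightarrow> prod_list (map fps_geom_inv cs) $ k = 0"
  by (induction cs arbitrary: k) (simp_all add: fps_geom_inv_mult_nth)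

lemma prod_fps_geom_inv_nth_0 [simp]: "prod_list (map fps_geom_inv cs) $ 0 = 1"
  by (induction cs) (simp_all add: fps_geom_inv_mult_nth fps_geom_inv_def)

lemma fps_wnorm_nonneg: "r \<ge> 0 \<Longrightarrow> fps_wnorm N A r \<ge> 0"
  unfolding fps_wnorm_def by (intro sum_nonneg) auto

lemma fps_wnorm_one [simp]: "fps_wnorm N (1 :: 'a :: real_normed_field fps) r = 1"
proof -
  have "fps_wnorm N (1 :: 'a fps) r = (\<Sum>k\<in>{0}. norm ((1 :: 'a fps) $ k) * r ^ k)"
    unfolding fps_wnorm_def by (rule sum.mono_neutral_right) auto
  then show ?thesis by simp
qed

lemma fps_wnorm_eq_sum_from_1:
  assumes "A $ 0 = 0"
  shows "fps_wnorm N A r = (\<Sum>k=1..N. norm (A $ k) * r ^ k)"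
proof -
  have "{..N} = insert 0 {1..N}" by auto
  then show ?thesis using assms by (simp add: fps_wnorm_def)
qed

lemma fps_wnorm_mult_le:
  assumes "r \<ge> 0"
  shows "fps_wnorm N (A * B) r \<le> fps_wnorm N A r * fps_wnorm N B r"
proof -
  define w where "w i j = norm (A $ i) * r ^ i * (norm (B $ j) * r ^ j)" for i j
  have w_nonneg: "w i j \<ge> 0" for i j unfolding w_def using assms by simp
  have "fps_wnorm N (A * B) r = (\<Sum>k\<le>N. norm (\<Sum>i\<le>k. A $ i * B $ (k - i)) * r ^ k)"
    unfolding fps_wnorm_def fps_mult_nth by (simp add: atLeast0AtMost)
  also have "\<dots> \<le> (\<Sum>k\<le>N. \<Sum>i\<le>k. w i (k - i))"
  proof (intro sum_mono)
    fix k
    have "norm (\<Sum>i\<le>k. A $ i * B $ (k - i)) * r ^ k \<le> (\<Sum>i\<le>k. norm (A $ i * B $ (k - i))) * r ^ k"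
      using assms by (intro mult_right_mono norm_sum) auto
    also have "\<dots> = (\<Sum>i\<le>k. w i (k - i))"
      unfolding sum_distrib_right w_def
      by (intro sum.cong) (auto simp: norm_mult simp flip: power_add)
    finally show "norm (\<Sum>i\<le>k. A $ i * B $ (k - i)) * r ^ k \<le> (\<Sum>i\<le>k. w i (k - i))" .
  qed
  also have "\<dots> = (\<Sum>(i, j)\<in>{(i, j). i + j \<le> N}. w i j)"
    by (rule sum.triangle_reindex_eq[symmetric])
  also have "\<dots> \<le> (\<Sum>(i, j)\<in>{..N} \<times> {..N}. w i j)"
    by (rule sum_mono2) (auto simp: w_nonneg)
  also have "\<dots> = fps_wnorm N A r * fps_wnorm N B r"
    unfolding fps_wnorm_def w_def by (simp add: sum_product sum.cartesian_product)
  finally show ?thesis .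
qed

lemma fps_wnorm_le_degree_bound:
  assumes "r \<ge> 0" "\<And>k. k > M \<Longrightarrow> A $ k = 0"
  shows "fps_wnorm N A r \<le> fps_wnorm M A r"
proof -
  have "fps_wnorm N A r = (\<Sum>k\<in>{..N} \<inter> {..M}. norm (A $ k) * r ^ k)"
    unfolding fps_wnorm_def by (rule sum.mono_neutral_right) (auto simp: assms(2) not_le)
  also have "\<dots> \<le> fps_wnorm M A r"
    unfolding fps_wnorm_def using assms(1) by (intro sum_mono2) auto
  finally show ?thesis .
qed

lemma fps_wnorm_geom_le:
  assumes "0 \<le> r" "r < 1" "norm c \<le> 1"
  shows "fps_wnorm N (fps_geom c) r \<le> 1 / (1 - r)"
proof -
  have "fps_wnorm N (fps_geom c) r \<le> (\<Sum>k<Suc N. r ^ k)"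
    unfolding fps_wnorm_def fps_geom_def lessThan_Suc_atMost
    using assms by (intro sum_mono) (auto simp: norm_power intro!: mult_left_le_one_le power_le_one)
  also have "\<dots> = (1 - r ^ Suc N) / (1 - r)"
    using assms by (subst sum_gp_strict) auto
  also have "\<dots> \<le> 1 / (1 - r)"
    using assms by (intro divide_right_mono) auto
  finally show ?thesis .
qed

lemma fps_wnorm_geom_inv_le:
  assumes "0 \<le> r" "r \<le> 1" "norm c \<le> 1"
  shows "fps_wnorm N (fps_geom_inv c) r \<le> 2"
proof -
  have "fps_wnorm N (fps_geom_inv c) r \<le> fps_wnorm 1 (fps_geom_inv c) r"
    using assms by (intro fps_wnorm_le_degree_bound) (auto simp: fps_geom_inv_def)
  also have "\<dots> = 1 + norm c * r"
    by (simp add: fps_wnorm_def fps_geom_inv_def atMost_Suc)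
  also have "\<dots> \<le> 2"
    using assms mult_mono[of "norm c" 1 r 1] by simp
  finally show ?thesis .
qed

lemma fps_wnorm_prod_list_le:
  assumes "r \<ge> 0" "\<forall>A\<in>set As. fps_wnorm N A r \<le> M"
  shows "fps_wnorm N (prod_list As) r \<le> M ^ length As"
  using assms(2)
proof (induction As)
  case (Cons A As)
  have "M \<ge> 0"
    using Cons.prems fps_wnorm_nonneg[OF assms(1), of N A] by auto
  have "fps_wnorm N (prod_list (A # As)) r \<le> fps_wnorm N A r * fps_wnorm N (prod_list As) r"
    using fps_wnorm_mult_le assms(1) by simp
  also have "\<dots> \<le> M * M ^ length As"
    using Cons \<open>M \<ge> 0\<close> assms(1) by (intro mult_mono fps_wnorm_nonneg) auto
  finally show ?case by simp
qed simp

text \<open>With \<open>P = F\<inverse>\<close> and \<open>Q = G\<inverse>\<close>, polynomials of degree \<open>\<le> d\<close>, one has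
  \<open>G P - 1 = G (P - Q)\<close> and \<open>P - Q = (G - F) P Q\<close>. Since \<open>P - Q\<close> has degree \<open>\<le> d\<close>, only the
  coefficients of \<open>G - F\<close> of degree \<open>\<le> d\<close> enter the bound.\<close>

lemma fps_wnorm_quotient_le:
  assumes "0 \<le> r" "r < 1" "\<forall>c\<in>set as. norm c \<le> 1" "\<forall>c\<in>set bs. norm c \<le> 1"
    and "length as = d" "length bs = d"
  defines "F \<equiv> prod_list (map fps_geom as)" and "G \<equiv> prod_list (map fps_geom bs)"
    and "P \<equiv> prod_list (map fps_geom_inv as)"
  shows "fps_wnorm N (G * P - 1) r \<le> (1 / (1 - r)) ^ d * 4 ^ d * fps_wnorm d (G - F) r"
proof -
  define Q where "Q = prod_list (map fps_geom_inv bs)"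
  have PF: "P * F = 1" and QG: "Q * G = 1"
    unfolding P_def F_def Q_def G_def by (rule prod_fps_geom_inv_mult_prod_geom)+
  have "r \<le> 1" using assms(2) by simp
  have G: "fps_wnorm N G r \<le> (1 / (1 - r)) ^ d"
    using fps_wnorm_prod_list_le[of r "map fps_geom bs" N "1 / (1 - r)"]
      fps_wnorm_geom_le[OF assms(1,2)] assms unfolding G_def by auto
  have P: "fps_wnorm d P r \<le> 2 ^ d" and Q: "fps_wnorm d Q r \<le> 2 ^ d"
    using fps_wnorm_prod_list_le[of r "map fps_geom_inv as" d 2]
      fps_wnorm_prod_list_le[of r "map fps_geom_inv bs" d 2]
      fps_wnorm_geom_inv_le[OF assms(1) \<open>r \<le> 1\<close>] assms unfolding P_def Q_def by auto
  have "G * P - 1 = G * (P - Q)"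
    using QG by (simp add: algebra_simps)
  have "P - Q = (G - F) * P * Q"
  proof -
    have "(G - F) * P * Q = (Q * G) * P - (P * F) * Q" by (simp add: algebra_simps)
    then show ?thesis using PF QG by simp
  qed
  have "(P - Q) $ k = 0" if "k > d" for k
    using that assms(5,6) prod_fps_geom_inv_nth_eq_0[of as k] prod_fps_geom_inv_nth_eq_0[of bs k]
    unfolding P_def Q_def by simp
  then have "fps_wnorm N (P - Q) r \<le> fps_wnorm d (P - Q) r"
    using fps_wnorm_le_degree_bound[OF assms(1)] by blast
  also have "\<dots> \<le> fps_wnorm d (G - F) r * fps_wnorm d P r * fps_wnorm d Q r"
    unfolding \<open>P - Q = (G - F) * P * Q\<close> using assms(1)
    by (intro order_trans[OF fps_wnorm_mult_le] mult_right_mono fps_wnorm_mult_le fps_wnorm_nonneg)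
  also have "\<dots> \<le> fps_wnorm d (G - F) r * 2 ^ d * 2 ^ d"
    using P Q assms(1) by (intro mult_mono mult_left_mono mult_nonneg_nonneg fps_wnorm_nonneg) auto
  finally have "fps_wnorm N (G * (P - Q)) r \<le> (1 / (1 - r)) ^ d * (fps_wnorm d (G - F) r * 2 ^ d * 2 ^ d)"
    using G assms(1,2) by (intro order_trans[OF fps_wnorm_mult_le] mult_mono fps_wnorm_nonneg) auto
  also have "\<dots> = (1 / (1 - r)) ^ d * 4 ^ d * fps_wnorm d (G - F) r"
    by (simp add: mult_ac flip: power_mult_distrib)
  finally show ?thesis
    unfolding \<open>G * P - 1 = G * (P - Q)\<close> .
qed

section \<open>Euler factors\<close>

definition local_fps :: "(nat \<Rightarrow> 'a) \<Rightarrow> nat \<Rightarrow> 'a fps" where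
  "local_fps a p = Abs_fps (\<lambda>k. a (p ^ k))"

definition local_roots :: "(nat \<Rightarrow> 'a) list \<Rightarrow> nat \<Rightarrow> 'a list" where
  "local_roots fs p = map (\<lambda>a. a p) fs"

lemma local_fps_dirichlet_conv:
  "prime p \<Longrightarrow> local_fps (dirichlet_conv a b) p = local_fps a p * local_fps b p"
  by (rule fps_ext) (simp add: local_fps_def dirichlet_conv_prime_power fps_mult_nth atLeast0AtMost)

lemma completely_multiplicative_power:
  assumes "completely_multiplicative a" "p > 0"
  shows "a (p ^ k) = a p ^ k"
  by (induction k) (use assms in \<open>simp_all add: completely_multiplicative_def\<close>)

lemma local_fps_dirichlet_unit: "prime p \<Longrightarrow> local_fps dirichlet_unit p = 1"
  using not_prime_1 by (intro fps_ext) (auto simp: local_fps_def dirichlet_unit_def power_eq_1_iff)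

lemma local_fps_conv_list:
  assumes "\<forall>a\<in>set fs. completely_multiplicative a" "prime p"
  shows "local_fps (conv_list fs) p = prod_list (map fps_geom (local_roots fs p))"
proof -
  have "local_fps a p = fps_geom (a p)" if "completely_multiplicative a" for a
    using that assms(2)
    by (intro fps_ext) (simp add: local_fps_def fps_geom_def completely_multiplicative_power prime_gt_0_nat)
  then show ?thesis
    using assms by (induction fs)
      (simp_all add: conv_list_def local_roots_def local_fps_dirichlet_unit local_fps_dirichlet_conv)
qed

lemma fps_wnorm_local_fps_minus_one:
  assumes "multiplicative h"
  shows "fps_wnorm N (local_fps h p - 1) r = (\<Sum>e=1..N. norm (h (p ^ e)) * r ^ e)"
  using assms by (subst fps_wnorm_eq_sum_from_1) (simp_all add: local_fps_def multiplicative_def)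

lemma fps_wnorm_local_fps_diff:
  assumes "multiplicative a" "multiplicative b"
  shows "fps_wnorm N (local_fps a p - local_fps b p) r = (\<Sum>k=1..N. norm (a (p ^ k) - b (p ^ k)) * r ^ k)"
  using assms by (subst fps_wnorm_eq_sum_from_1) (simp_all add: local_fps_def multiplicative_def)

definition conv_quotient :: "(nat \<Rightarrow> complex) list \<Rightarrow> (nat \<Rightarrow> complex) list \<Rightarrow> nat \<Rightarrow> complex" where
  "conv_quotient fs gs = multiplicative_from_prime_powers
     (\<lambda>p k. (local_fps (conv_list gs) p * prod_list (map fps_geom_inv (local_roots fs p))) $ k)"

lemma multiplicative_conv_quotient: "multiplicative (conv_quotient fs gs)"
  unfolding conv_quotient_def by (rule multiplicative_multiplicative_from_prime_powers)

lemma local_fps_conv_quotient: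
  assumes "\<forall>a\<in>set gs. completely_multiplicative a" "prime p"
  shows "local_fps (conv_quotient fs gs) p =
    local_fps (conv_list gs) p * prod_list (map fps_geom_inv (local_roots fs p))"
proof (rule fps_ext)
  fix k
  have "conv_list gs 1 = 1"
    using multiplicative_conv_list[OF assms(1)] by (simp add: multiplicative_def)
  then show "local_fps (conv_quotient fs gs) p $ k =
      (local_fps (conv_list gs) p * prod_list (map fps_geom_inv (local_roots fs p))) $ k"
    using assms(2) by (cases "k = 0")
      (simp add: local_fps_def conv_quotient_def multiplicative_from_prime_powers_def,
        simp add: local_fps_def conv_quotient_def multiplicative_from_prime_powers_prime_power)
qed

lemma conv_list_eq_dirichlet_conv_quotient:
  assumes "\<forall>a\<in>set fs. completely_multiplicative a" "\<forall>a\<in>set gs. completely_multiplicative a"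
    and "n > 0"
  shows "conv_list gs n = dirichlet_conv (conv_quotient fs gs) (conv_list fs) n"
proof (rule multiplicative_eqI[OF _ _ _ assms(3)])
  show "multiplicative (conv_list gs)"
    using assms(2) by (rule multiplicative_conv_list)
  show "multiplicative (dirichlet_conv (conv_quotient fs gs) (conv_list fs))"
    using assms(1) by (intro multiplicative_dirichlet_conv multiplicative_conv_list
        multiplicative_conv_quotient)
  fix p k :: nat
  assume p: "prime p"
  have "local_fps (dirichlet_conv (conv_quotient fs gs) (conv_list fs)) p
      = local_fps (conv_list gs) p *
          (prod_list (map fps_geom_inv (local_roots fs p)) * prod_list (map fps_geom (local_roots fs p)))"
    using p assms by (simp add: local_fps_dirichlet_conv local_fps_conv_quotient local_fps_conv_list
        mult.assoc)
  also have "\<dots> = local_fps (conv_list gs) p"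
    by (simp add: prod_fps_geom_inv_mult_prod_geom)
  finally show "conv_list gs (p ^ k) = dirichlet_conv (conv_quotient fs gs) (conv_list fs) (p ^ k)"
    by (metis fps_nth_Abs_fps local_fps_def)
qed

lemma conv_quotient_prime_power_sum_le:
  assumes "\<forall>a\<in>set fs. completely_multiplicative a \<and> cmod (a p) \<le> 1"
    and "\<forall>a\<in>set gs. completely_multiplicative a \<and> cmod (a p) \<le> 1"
    and "length fs = d" "length gs = d" "prime p" "0 \<le> r" "r < 1"
  shows "(\<Sum>e=1..N. cmod (conv_quotient fs gs (p ^ e)) * r ^ e)
         \<le> (1 / (1 - r)) ^ d * 4 ^ d *
           (\<Sum>k=1..d. cmod (conv_list gs (p ^ k) - conv_list fs (p ^ k)) * r ^ k)"
proof -
  have cm: "\<forall>a\<in>set fs. completely_multiplicative a" "\<forall>a\<in>set gs. completely_multiplicative a"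
    using assms(1,2) by auto
  let ?F = "local_fps (conv_list fs) p" and ?G = "local_fps (conv_list gs) p"
  have "(\<Sum>e=1..N. cmod (conv_quotient fs gs (p ^ e)) * r ^ e) =
      fps_wnorm N (?G * prod_list (map fps_geom_inv (local_roots fs p)) - 1) r"
    using cm assms(5)
    by (simp add: fps_wnorm_local_fps_minus_one multiplicative_conv_quotient
        flip: local_fps_conv_quotient)
  also have "\<dots> \<le> (1 / (1 - r)) ^ d * 4 ^ d * fps_wnorm d (?G - ?F) r"
    unfolding local_fps_conv_list[OF cm(1) assms(5)] local_fps_conv_list[OF cm(2) assms(5)]
    by (rule fps_wnorm_quotient_le) (use assms in \<open>auto simp: local_roots_def\<close>)
  also have "fps_wnorm d (?G - ?F) r =
      (\<Sum>k=1..d. cmod (conv_list gs (p ^ k) - conv_list fs (p ^ k)) * r ^ k)"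
    using cm by (simp add: fps_wnorm_local_fps_diff multiplicative_conv_list)
  finally show ?thesis .
qed

section \<open>Euler product bound\<close>

lemma multiplicity_le_self:
  assumes "prime (p :: nat)" "k > 0"
  shows "multiplicity p k \<le> k"
proof -
  have "multiplicity p k < 2 ^ multiplicity p k" by (rule less_exp)
  also have "\<dots> \<le> p ^ multiplicity p k"
    using prime_ge_2_nat[OF assms(1)] by (rule power_mono) simp
  also have "\<dots> \<le> k"
    using assms(2) by (intro dvd_imp_le multiplicity_dvd) auto
  finally show ?thesis by simp
qed

lemma multiplicative_norm_mult_powr:
  fixes h :: "nat \<Rightarrow> 'a :: real_normed_field"
  assumes "multiplicative h" "k > 0"
  shows "norm (h k) * real k powr \<sigma> =
    (\<Prod>p\<in>prime_factors k. norm (h (p ^ multiplicity p k)) * (real p powr \<sigma>) ^ multiplicity p k)"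
proof -
  have factor: "(real p powr \<sigma>) ^ m = real (p ^ m) powr \<sigma>" if "p > 0" for p m
    using that by (simp add: powr_power powr_realpow[symmetric] powr_powr mult.commute)
  have "(\<Prod>p\<in>prime_factors k. (real p powr \<sigma>) ^ multiplicity p k)
      = (\<Prod>p\<in>prime_factors k. real (p ^ multiplicity p k) powr \<sigma>)"
    by (intro prod.cong refl factor) (meson in_prime_factors_imp_prime prime_gt_0_nat)
  also have "\<dots> = (\<Prod>p\<in>prime_factors k. real (p ^ multiplicity p k)) powr \<sigma>"
    by (rule prod_powr_distrib[symmetric])
  also have "(\<Prod>p\<in>prime_factors k. real (p ^ multiplicity p k)) = real k"
    using prime_factorization_nat[OF assms(2)] by (simp del: of_nat_power add: of_nat_prod[symmetric])
  finally show ?thesis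
    using multiplicative_eq_prod_prime_factors[OF assms]
    by (simp add: prod.distrib prod_norm)
qed

text \<open>The exponent vectors \<open>p \<mapsto> multiplicity p k\<close> (\<open>p \<le> N\<close> prime) embed \<open>{1..N}\<close> into
  \<open>{..N}\<^sup>P\<close>, so the partial sum is dominated by the truncated Euler product
  \<open>\<Prod>p\<le>N. \<Sum>e\<le>N. |h(p^e)| p^(-e\<sigma>)\<close>, and \<open>1 + t \<le> exp t\<close>.\<close>

lemma multiplicative_weighted_sum_le_exp:
  fixes h :: "nat \<Rightarrow> 'a :: real_normed_field"
  assumes "multiplicative h"
    and local_bound: "\<And>p M. prime p \<Longrightarrow> (\<Sum>e=1..M. norm (h (p ^ e)) * (real p powr -\<sigma>) ^ e) \<le> a p"
  shows "(\<Sum>k=1..N. norm (h k) * real k powr -\<sigma>) \<le> exp (\<Sum>p | prime p \<and> p \<le> N. a p)"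
proof -
  define P where "P = {p. prime p \<and> p \<le> N}"
  have "finite P" unfolding P_def by auto
  define w where "w p e = norm (h (p ^ e)) * (real p powr -\<sigma>) ^ e" for p e
  have w_0: "w p 0 = 1" for p
    using assms(1) by (simp add: w_def multiplicative_def)
  define exps where "exps k = restrict (\<lambda>p. multiplicity p k) P" for k
  have prime_factors_sub: "prime_factors k \<subseteq> P" if "k \<in> {1..N}" for k
  proof
    fix q assume "q \<in> prime_factors k"
    then have "prime q" "q \<le> k" using that by (auto intro: dvd_imp_le)
    then show "q \<in> P" using that by (simp add: P_def)
  qed
  have exps: "exps k \<in> PiE P (\<lambda>_. {..N})" if "k \<in> {1..N}" for k
  proof -
    have "multiplicity p k \<le> N" if "p \<in> P" for p
      using that \<open>k \<in> {1..N}\<close> multiplicity_le_self[of p k] by (simp add: P_def)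
    then show ?thesis by (simp add: exps_def)
  qed
  have "inj_on exps {1..N}"
  proof (rule inj_onI)
    fix k k' assume k: "k \<in> {1..N}" "k' \<in> {1..N}" "exps k = exps k'"
    have "multiplicity p k = multiplicity p k'" if "prime p" for p
    proof (cases "p \<in> P")
      case True
      then show ?thesis using fun_cong[OF k(3), of p] by (simp add: exps_def)
    next
      case False
      then have "p \<notin> prime_factors k" "p \<notin> prime_factors k'"
        using prime_factors_sub k(1,2) by auto
      then show ?thesis using that k(1,2) by (auto simp: prime_factors_multiplicity)
    qed
    then have "normalize k = normalize k'"
      using k(1,2) by (intro multiplicity_eq_imp_eq) auto
    then show "k = k'" by simp
  qed
  have weight: "norm (h k) * real k powr -\<sigma> = (\<Prod>p\<in>P. w p (exps k p))" if "k \<in> {1..N}" for k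
  proof -
    have "(\<Prod>p\<in>P. w p (exps k p)) = (\<Prod>p\<in>prime_factors k. w p (multiplicity p k))"
      using that prime_factors_sub[OF that] \<open>finite P\<close>
      by (intro prod.mono_neutral_cong_right)
        (auto simp: exps_def w_0 P_def prime_factors_multiplicity)
    then show ?thesis
      using that multiplicative_norm_mult_powr[OF assms(1)] by (simp add: w_def)
  qed
  have "(\<Sum>k=1..N. norm (h k) * real k powr -\<sigma>) = (\<Sum>\<phi>\<in>exps ` {1..N}. \<Prod>p\<in>P. w p (\<phi> p))"
    using \<open>inj_on exps {1..N}\<close> by (simp add: sum.reindex weight)
  also have "\<dots> \<le> (\<Sum>\<phi>\<in>PiE P (\<lambda>_. {..N}). \<Prod>p\<in>P. w p (\<phi> p))"
  proof (rule sum_mono2)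
    show "finite (PiE P (\<lambda>_. {..N}))" using \<open>finite P\<close> by (intro finite_PiE) auto
    show "exps ` {1..N} \<subseteq> PiE P (\<lambda>_. {..N})" using exps by blast
  qed (auto intro!: prod_nonneg simp: w_def)
  also have "\<dots> = (\<Prod>p\<in>P. \<Sum>e\<le>N. w p e)"
    by (rule prod_sum_PiE[symmetric]) (use \<open>finite P\<close> in auto)
  also have "\<dots> \<le> (\<Prod>p\<in>P. exp (a p))"
  proof (rule prod_mono)
    fix p assume p: "p \<in> P"
    have "(\<Sum>e\<le>N. w p e) = 1 + (\<Sum>e=1..N. w p e)"
      by (simp add: atLeast0AtMost[symmetric] sum.atLeast_Suc_atMost w_0)
    also have "\<dots> \<le> exp (a p)"
      using local_bound[of p N] p by (intro order_trans[OF _ exp_ge_add_one_self]) (auto simp: P_def w_def)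
    finally show "0 \<le> (\<Sum>e\<le>N. w p e) \<and> (\<Sum>e\<le>N. w p e) \<le> exp (a p)"
      by (auto intro: sum_nonneg simp: w_def)
  qed
  also have "\<dots> = exp (\<Sum>p\<in>P. a p)"
    by (simp add: exp_sum \<open>finite P\<close>)
  finally show ?thesis unfolding P_def .
qed

section \<open>Summatory functions of Dirichlet convolutions\<close>

lemma sum_upto_sum_divisors_swap:
  fixes \<phi> :: "nat \<Rightarrow> nat \<Rightarrow> 'a :: comm_monoid_add"
  shows "(\<Sum>n=1..N. \<Sum>k | k dvd n. \<phi> k (n div k)) = (\<Sum>k=1..N. \<Sum>m=1..N div k. \<phi> k m)"
proof -
  have "(\<Sum>n=1..N. \<Sum>k | k dvd n. \<phi> k (n div k)) =
      (\<Sum>(n, k)\<in>Sigma {1..N} (\<lambda>n. {k. k dvd n}). \<phi> k (n div k))"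
    by (rule sum.Sigma) (auto simp: finite_divisors_nat)
  also have "\<dots> = (\<Sum>(k, m)\<in>Sigma {1..N} (\<lambda>k. {1..N div k}). \<phi> k m)"
  proof (rule sum.reindex_bij_witness[where i = "\<lambda>(k, m). (k * m, k)" and j = "\<lambda>(n, k). (k, n div k)"])
    fix km assume "km \<in> Sigma {1..N} (\<lambda>k. {1..N div k})"
    then obtain k m where km: "km = (k, m)" "1 \<le> k" "1 \<le> m" "m \<le> N div k" by auto
    then have "k * m \<le> k * (N div k)" by simp
    also have "\<dots> \<le> N" by simp
    finally show "(\<lambda>(n, k). (k, n div k)) ((\<lambda>(k, m). (k * m, k)) km) = km"
      and "(\<lambda>(k, m). (k * m, k)) km \<in> Sigma {1..N} (\<lambda>n. {k. k dvd n})"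
      using km by auto
  next
    fix nk assume "nk \<in> Sigma {1..N} (\<lambda>n. {k. k dvd n})"
    then obtain n k where nk: "nk = (n, k)" "1 \<le> n" "n \<le> N" "k dvd n" by auto
    then have "k > 0" "k \<le> n" by (auto intro: Nat.gr0I dvd_imp_le)
    then have "1 \<le> n div k" "n div k \<le> N div k"
      using nk div_le_mono[of k n k] by (auto intro: div_le_mono)
    then show "(\<lambda>(n, k). (k, n div k)) nk \<in> Sigma {1..N} (\<lambda>k. {1..N div k})"
      and "(\<lambda>(k, m). (k * m, k)) ((\<lambda>(n, k). (k, n div k)) nk) = nk"
      using nk \<open>k \<le> n\<close> \<open>k > 0\<close> by auto
  qed auto
  also have "\<dots> = (\<Sum>k=1..N. \<Sum>m=1..N div k. \<phi> k m)"
    by (rule sum.Sigma[symmetric]) auto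
  finally show ?thesis .
qed

lemma nat_floor_divide_of_nat:
  assumes "x \<ge> 0"
  shows "nat \<lfloor>x / real k\<rfloor> = nat \<lfloor>x\<rfloor> div k"
proof -
  have "\<lfloor>x / real k\<rfloor> = \<lfloor>x\<rfloor> div int k"
    using floor_divide_real_eq_div[of "int k" x] by simp
  then show ?thesis using assms by (simp add: nat_div_distrib)
qed

lemma summatory_dirichlet_conv:
  assumes "x \<ge> 0"
  shows "summatory (dirichlet_conv h f) x = (\<Sum>k=1..nat \<lfloor>x\<rfloor>. h k * summatory f (x / real k))"
  using assms sum_upto_sum_divisors_swap[of "\<lambda>k m. h k * f m"]
  by (simp add: summatory_def dirichlet_conv_def sum_distrib_left nat_floor_divide_of_nat)

lemma summatory_cong: "(\<And>n. n > 0 \<Longrightarrow> f n = g n) \<Longrightarrow> summatory f x = summatory g x"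
  unfolding summatory_def by (intro sum.cong) auto

lemma summatory_bigo_imp_bound:
  assumes "(\<lambda>x. cmod (summatory f x)) \<in> O[at_top](\<lambda>x. x powr \<alpha>)"
  obtains C where "C \<ge> 0" "\<And>y. y \<ge> 1 \<Longrightarrow> cmod (summatory f y) \<le> C * y powr \<alpha>"
proof -
  obtain c where "c > 0" "eventually (\<lambda>x. cmod (summatory f x) \<le> c * x powr \<alpha>) at_top"
    using landau_o.bigE[OF assms] by auto
  then obtain X where X: "X \<ge> 1" "\<And>y. y \<ge> X \<Longrightarrow> cmod (summatory f y) \<le> c * y powr \<alpha>"
    unfolding eventually_at_top_linorder by (metis order.trans max.cobounded1 max.cobounded2)
  define M where "M = (\<Sum>n=1..nat \<lceil>X\<rceil>. cmod (f n))"
  define m where "m = min 1 (X powr \<alpha>)"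
  have "m > 0" using X(1) by (simp add: m_def)
  have "M \<ge> 0" unfolding M_def by (intro sum_nonneg) auto
  have small: "cmod (summatory f y) \<le> M / m * y powr \<alpha>" if "1 \<le> y" "y \<le> X" for y
  proof -
    have "m \<le> y powr \<alpha>"
    proof (cases "\<alpha> \<ge> 0")
      case True
      then have "1 \<le> y powr \<alpha>" using that(1) by (rule ge_one_powr_ge_zero[rotated])
      then show ?thesis by (simp add: m_def)
    next
      case False
      then have "X powr \<alpha> \<le> y powr \<alpha>" using that by (intro powr_mono2') auto
      then show ?thesis by (simp add: m_def)
    qed
    have "\<lfloor>y\<rfloor> \<le> \<lceil>X\<rceil>"
      using floor_mono[OF that(2)] floor_le_ceiling[of X] by linarith
    have "cmod (summatory f y) \<le> (\<Sum>n=1..nat \<lfloor>y\<rfloor>. cmod (f n))"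
      unfolding summatory_def by (rule norm_sum)
    also have "\<dots> \<le> M"
      unfolding M_def using \<open>\<lfloor>y\<rfloor> \<le> \<lceil>X\<rceil>\<close> by (intro sum_mono2) auto
    also have "\<dots> \<le> M / m * y powr \<alpha>"
      using \<open>m > 0\<close> \<open>M \<ge> 0\<close> mult_left_mono[OF \<open>m \<le> y powr \<alpha>\<close> \<open>M \<ge> 0\<close>]
      by (simp add: field_simps)
    finally show ?thesis .
  qed
  show ?thesis
  proof (rule that[of "max c (M / m)"])
    show "max c (M / m) \<ge> 0" using \<open>c > 0\<close> by simp
    fix y :: real assume "y \<ge> 1"
    then have "cmod (summatory f y) \<le> c * y powr \<alpha> \<or> cmod (summatory f y) \<le> M / m * y powr \<alpha>"
      using X(2)[of y] small[of y] by linarith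
    moreover have "c * y powr \<alpha> \<le> max c (M / m) * y powr \<alpha>" "M / m * y powr \<alpha> \<le> max c (M / m) * y powr \<alpha>"
      by (intro mult_right_mono; simp)+
    ultimately show "cmod (summatory f y) \<le> max c (M / m) * y powr \<alpha>"
      by linarith
  qed
qed

lemma dirichlet_conv_cong_right:
  assumes "\<And>m. m > 0 \<Longrightarrow> b m = b' m" "n > 0"
  shows "dirichlet_conv a b n = dirichlet_conv a b' n"
  unfolding dirichlet_conv_def using assms
  by (intro sum.cong refl) (auto simp: dvd_div_eq_0_iff)

lemma summatory_dirichlet_conv_bigo:
  assumes "(\<lambda>x. cmod (summatory f x)) \<in> O[at_top](\<lambda>x. x powr \<alpha>)"
    and "\<And>N. (\<Sum>k=1..N. cmod (h k) * real k powr -\<beta>) \<le> B"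
  shows "(\<lambda>x. cmod (summatory (dirichlet_conv h f) x)) \<in> O[at_top](\<lambda>x. x powr max \<alpha> \<beta>)"
proof -
  obtain C where C: "C \<ge> 0" "\<And>y. y \<ge> 1 \<Longrightarrow> cmod (summatory f y) \<le> C * y powr \<alpha>"
    using summatory_bigo_imp_bound[OF assms(1)] by blast
  let ?\<gamma> = "max \<alpha> \<beta>"
  have bound: "cmod (summatory (dirichlet_conv h f) x) \<le> C * B * x powr ?\<gamma>" if "x \<ge> 1" for x
  proof -
    have summand: "cmod (h k * summatory f (x / real k)) \<le> C * x powr ?\<gamma> * (cmod (h k) * real k powr -\<beta>)"
      if k: "k \<in> {1..nat \<lfloor>x\<rfloor>}" for k
    proof -
      have "int k \<le> \<lfloor>x\<rfloor>" using k \<open>x \<ge> 1\<close> by (simp add: le_nat_iff)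
      then have "real k \<le> x" by (simp add: le_floor_iff)
      have "real k \<ge> 1" using k by simp
      have "cmod (summatory f (x / real k)) \<le> C * (x / real k) powr \<alpha>"
        using \<open>real k \<le> x\<close> \<open>real k \<ge> 1\<close> by (intro C(2)) simp
      also have "\<dots> \<le> C * (x / real k) powr ?\<gamma>"
        using C(1) \<open>real k \<le> x\<close> \<open>real k \<ge> 1\<close> by (intro mult_left_mono powr_mono) auto
      also have "\<dots> = C * x powr ?\<gamma> / real k powr ?\<gamma>"
        using that by (simp add: powr_divide)
      also have "\<dots> \<le> C * x powr ?\<gamma> * real k powr -\<beta>"
        using C(1) \<open>real k \<ge> 1\<close>
        by (simp add: powr_minus_divide divide_left_mono powr_mono mult_nonneg_nonneg)
      finally have "cmod (summatory f (x / real k)) \<le> C * x powr ?\<gamma> * real k powr -\<beta>" .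
      then have "cmod (h k) * cmod (summatory f (x / real k)) \<le>
          cmod (h k) * (C * x powr ?\<gamma> * real k powr -\<beta>)"
        by (rule mult_left_mono) simp
      then show ?thesis
        by (simp add: norm_mult mult_ac)
    qed
    have "cmod (summatory (dirichlet_conv h f) x) \<le>
        (\<Sum>k=1..nat \<lfloor>x\<rfloor>. cmod (h k * summatory f (x / real k)))"
      using that by (simp add: summatory_dirichlet_conv norm_sum)
    also have "\<dots> \<le> C * x powr ?\<gamma> * (\<Sum>k=1..nat \<lfloor>x\<rfloor>. cmod (h k) * real k powr -\<beta>)"
      unfolding sum_distrib_left by (intro sum_mono summand)
    also have "\<dots> \<le> C * x powr ?\<gamma> * B"
      using C(1) assms(2) by (intro mult_left_mono) auto
    finally show ?thesis by (simp add: mult_ac)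
  qed
  have "eventually (\<lambda>x. norm (cmod (summatory (dirichlet_conv h f) x)) \<le> C * B * norm (x powr max \<alpha> \<beta>)) at_top"
    using eventually_ge_at_top[of "1 :: real"] by eventually_elim (simp add: bound)
  then show ?thesis by (rule bigoI)
qed

lemma Dhat_term_nonneg: "Dhat_term \<beta> k f g p \<ge> 0"
  unfolding Dhat_term_def by (intro sum_nonneg) auto

lemma conv_quotient_prime_power_sum_le_Dhat_term:
  assumes "length fs = d" "\<forall>a\<in>set fs. completely_multiplicative a \<and> (\<forall>n>0. cmod (a n) \<le> 1)"
    and "\<forall>n>0. f n = conv_list fs n"
    and "length gs = d" "\<forall>a\<in>set gs. completely_multiplicative a \<and> (\<forall>n>0. cmod (a n) \<le> 1)"
    and "\<forall>n>0. g n = conv_list gs n"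
    and "prime p" "\<beta> > 0"
  shows "(\<Sum>e=1..M. cmod (conv_quotient fs gs (p ^ e)) * (real p powr -\<beta>) ^ e)
    \<le> (1 / (1 - 2 powr -\<beta>)) ^ d * 4 ^ d * Dhat_term \<beta> d f g p"
proof -
  define r where "r = real p powr -\<beta>"
  have "r \<ge> 0" by (simp add: r_def)
  have "r \<le> 2 powr -\<beta>"
    unfolding r_def using prime_ge_2_nat[OF assms(7)] assms(8) by (intro powr_mono2') auto
  moreover have "2 powr -\<beta> < 1"
    using assms(8) by (simp add: powr_minus_divide)
  ultimately have "r < 1" by simp
  have "(\<Sum>e=1..M. cmod (conv_quotient fs gs (p ^ e)) * r ^ e)
      \<le> (1 / (1 - r)) ^ d * 4 ^ d *
         (\<Sum>k=1..d. cmod (conv_list gs (p ^ k) - conv_list fs (p ^ k)) * r ^ k)"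
    using assms \<open>r \<ge> 0\<close> \<open>r < 1\<close> prime_gt_0_nat[OF assms(7)]
    by (intro conv_quotient_prime_power_sum_le) auto
  also have "(\<Sum>k=1..d. cmod (conv_list gs (p ^ k) - conv_list fs (p ^ k)) * r ^ k) =
      Dhat_term \<beta> d f g p"
    unfolding Dhat_term_def
  proof (intro sum.cong refl)
    fix k
    have "r ^ k = real p powr (real k * -\<beta>)"
      using prime_gt_0_nat[OF assms(7)] by (simp add: r_def powr_power)
    also have "\<dots> = 1 / real p powr (real k * \<beta>)"
      by (subst powr_minus_divide[symmetric]) simp
    finally have "r ^ k = 1 / real p powr (real k * \<beta>)" .
    then show "cmod (conv_list gs (p ^ k) - conv_list fs (p ^ k)) * r ^ k =
        cmod (f (p ^ k) - g (p ^ k)) / real p powr (real k * \<beta>)"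
      using assms(3,6) prime_gt_0_nat[OF assms(7)] by (simp add: norm_minus_commute)
  qed
  also have "(1 / (1 - r)) ^ d * 4 ^ d * Dhat_term \<beta> d f g p
      \<le> (1 / (1 - 2 powr -\<beta>)) ^ d * 4 ^ d * Dhat_term \<beta> d f g p"
    using \<open>r \<le> 2 powr -\<beta>\<close> \<open>r < 1\<close> \<open>2 powr -\<beta> < 1\<close>
    by (intro mult_right_mono Dhat_term_nonneg power_mono divide_left_mono) auto
  finally show ?thesis unfolding r_def .
qed

theorem theorem4:
  fixes d :: nat and f g :: "nat \<Rightarrow> complex" and \<alpha> \<beta> :: real
  assumes "d \<ge> 1"
    and "f \<in> S_deg d" and "g \<in> S_deg d"
    and "\<beta> > 0"
    and "Dhat_term \<beta> d f g summable_on {p::nat. prime p}"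
    and "(\<lambda>x. cmod (summatory f x)) \<in> O[at_top](\<lambda>x. x powr \<alpha>)"
  shows "(\<lambda>x. cmod (summatory g x)) \<in> O[at_top](\<lambda>x. x powr (max \<alpha> \<beta>))"
proof -
  obtain fs where fs: "length fs = d" "\<forall>a\<in>set fs. completely_multiplicative a \<and> (\<forall>n>0. cmod (a n) \<le> 1)"
      "\<forall>n>0. f n = conv_list fs n"
    using assms(2) unfolding S_deg_def by blast
  obtain gs where gs: "length gs = d" "\<forall>a\<in>set gs. completely_multiplicative a \<and> (\<forall>n>0. cmod (a n) \<le> 1)"
      "\<forall>n>0. g n = conv_list gs n"
    using assms(3) unfolding S_deg_def by blast
  define h where "h = conv_quotient fs gs"
  define K where "K = (1 / (1 - 2 powr -\<beta>)) ^ d * (4 :: real) ^ d"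
  have "2 powr -\<beta> < 1" using assms(4) by (simp add: powr_minus_divide)
  then have "K \<ge> 0" unfolding K_def by (intro mult_nonneg_nonneg zero_le_power) auto
  have bounded: "(\<Sum>k=1..N. cmod (h k) * real k powr -\<beta>) \<le> exp (K * infsum (Dhat_term \<beta> d f g) {p. prime p})"
    for N
  proof -
    have "(\<Sum>k=1..N. cmod (h k) * real k powr -\<beta>) \<le> exp (\<Sum>p | prime p \<and> p \<le> N. K * Dhat_term \<beta> d f g p)"
      unfolding h_def K_def
      by (rule multiplicative_weighted_sum_le_exp[OF multiplicative_conv_quotient
          conv_quotient_prime_power_sum_le_Dhat_term[OF fs gs _ assms(4)]])
    also have "\<dots> \<le> exp (K * infsum (Dhat_term \<beta> d f g) {p. prime p})"
      unfolding sum_distrib_left[symmetric] using \<open>K \<ge> 0\<close> assms(5)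
      by (intro exp_mono mult_left_mono finite_sum_le_infsum Dhat_term_nonneg) auto
    finally show ?thesis .
  qed
  have "g n = dirichlet_conv h f n" if "n > 0" for n
  proof -
    have "g n = dirichlet_conv h (conv_list fs) n"
      using that fs(2) gs(2,3) conv_list_eq_dirichlet_conv_quotient[of fs gs n]
      unfolding h_def by simp
    also have "\<dots> = dirichlet_conv h f n"
      using fs(3) that by (intro dirichlet_conv_cong_right) auto
    finally show ?thesis .
  qed
  then have "summatory g = summatory (dirichlet_conv h f)"
    by (intro ext summatory_cong)
  then show ?thesis
    using summatory_dirichlet_conv_bigo[OF assms(6) bounded] by simp
qed

end
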